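(* Let $\mathsf{T}$ be the algebra antihomomorphism of $U_{K,L,norm}$ (i.e. linear with $\mathsf{T}(xy)=\mathsf{T}(y)\mathsf{T}(x)$, $\mathsf{T}(\mathbf{1})=\mathbf{1}$) determined by $\mathsf{T}(K)=\overline{K}$, $\mathsf{T}(\overline{K})=K$, $\mathsf{T}(L)=\overline{L}$, $\mathsf{T}(\overline{L})=L$, $\mathsf{T}(E)=-E(\overline{K}+\overline{L})$, $\mathsf{T}(F)=-(K+L)F$. Then $\mathsf{T}$ is von Neumann regular with respect to convolution: $\mathsf{id}\star\mathsf{T}\star\mathsf{id}=\mathsf{id}$ and $\mathsf{T}\star\mathsf{id}\star\mathsf{T}=\mathsf{T}$.
   Context: Fix $q\in\mathbb{C}$, $q\neq 0,\pm1$. $U_{K,L,norm}$ is the unital associative $\mathbb{C}$-algebra generated by $K,\overline{K},L,\overline{L},E,F$ subject to $K\overline{K}K=K$, $\overline{K}K\overline{K}=\overline{K}$, $K\overline{K}=\overline{K}K$, $L\overline{L}L=L$, $\overline{L}L\overline{L}=\overline{L}$, $L\overline{L}=\overline{L}L$, $K\overline{K}+L\overline{L}=\mathbf{1}$, $KE=q^2EK$, $LE=q^2EL$, $\overline{K}E=q^{-2}E\overline{K}$, $\overline{L}E=q^{-2}E\overline{L}$, $KF=q^{-2}FK$, $LF=q^{-2}FL$, $\overline{K}F=q^2F\overline{K}$, $\overline{L}F=q^2F\overline{L}$, $EF-FE=\frac{(K+L)-(\overline{K}+\overline{L})}{q-q^{-1}}$. It is a bialgebra with the algebra homomorphisms $\Delta,\varepsilon$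 determined by $\Delta(K)=K\otimes K$, $\Delta(\overline{K})=\overline{K}\otimes\overline{K}$, $\Delta(L)=L\otimes L+L\otimes K+K\otimes L$, $\Delta(\overline{L})=\overline{L}\otimes\overline{L}+\overline{L}\otimes\overline{K}+\overline{K}\otimes\overline{L}$, $\Delta(E)=\mathbf{1}\otimes E+E\otimes(K+L)$, $\Delta(F)=F\otimes\mathbf{1}+(\overline{K}+\overline{L})\otimes F$, $\varepsilon(K)=\varepsilon(\overline{K})=1$, $\varepsilon(L)=\varepsilon(\overline{L})=\varepsilon(E)=\varepsilon(F)=0$. For linear maps $A,B$ of $U_{K,L,norm}$, the convolution is $A\star B=\mu\circ(A\otimes B)\circ\Delta$, where $\mu$ is the multiplication. *)

theory Defs
  imports Complex_Main "HOL-Library.Poly_Mapping"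
begin

datatype gen = gK | gKb | gL | gLb | gE | gF

type_synonym free = "gen list \<Rightarrow>\<^sub>0 complex"

definition fmul :: "free \<Rightarrow> free \<Rightarrow> free" where
  "fmul p r = (\<Sum>u\<in>Poly_Mapping.keys p. \<Sum>v\<in>Poly_Mapping.keys r. Poly_Mapping.single (u @ v) (Poly_Mapping.lookup p u * Poly_Mapping.lookup r v))"

definition fsc :: "complex \<Rightarrow> free \<Rightarrow> free" where
  "fsc c p = fmul (Poly_Mapping.single [] c) p"

definition fone :: free where "fone = Poly_Mapping.single [] 1"

definition fgen :: "gen \<Rightarrow> free" where "fgen g = Poly_Mapping.single [g] 1"

definition flin :: "(gen list \<Rightarrow> free) \<Rightarrow> free \<Rightarrow> free" where
  "flin f p = (\<Sum>u\<in>Poly_Mapping.keys p. fsc (Poly_Mapping.lookup p u) (f u))"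

definition rels :: "complex \<Rightarrow> free set" where
  "rels q = (let K = fgen gK; Kb = fgen gKb; L = fgen gL; Lb = fgen gLb; E = fgen gE; F = fgen gF;
               m = fmul in
   { m K (m Kb K) - K, m Kb (m K Kb) - Kb, m K Kb - m Kb K,
     m L (m Lb L) - L, m Lb (m L Lb) - Lb, m L Lb - m Lb L,
     m K Kb + m L Lb - fone,
     m K E - fsc (q^2) (m E K), m L E - fsc (q^2) (m E L),
     m Kb E - fsc (q powi -2) (m E Kb), m Lb E - fsc (q powi -2) (m E Lb),
     m K F - fsc (q powi -2) (m F K), m L F - fsc (q powi -2) (m F L),
     m Kb F - fsc (q^2) (m F Kb), m Lb F - fsc (q^2) (m F Lb),
     m E F - m F E - fsc (1 / (q - inverse q)) ((K + L) - (Kb + Lb)) })"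

inductive_set ideal_U :: "complex \<Rightarrow> free set" for q where
  gen_rel: "r \<in> rels q \<Longrightarrow> r \<in> ideal_U q"
| zero: "0 \<in> ideal_U q"
| add: "a \<in> ideal_U q \<Longrightarrow> b \<in> ideal_U q \<Longrightarrow> a + b \<in> ideal_U q"
| mult: "a \<in> ideal_U q \<Longrightarrow> fmul x (fmul a y) \<in> ideal_U q"

text \<open>Equality in U_{K,L,norm}: two representatives are equal iff their difference lies in the ideal.\<close>
definition eqU :: "complex \<Rightarrow> free \<Rightarrow> free \<Rightarrow> bool" where
  "eqU q a b \<longleftrightarrow> a - b \<in> ideal_U q"

text \<open>Delta of a generator, as a list of simple tensors a \<otimes> b.\<close>
fun Dgen :: "gen \<Rightarrow> (free \<times> free) list" where
  "Dgen gK = [(fgen gK, fgen gK)]"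
| "Dgen gKb = [(fgen gKb, fgen gKb)]"
| "Dgen gL = [(fgen gL, fgen gL), (fgen gL, fgen gK), (fgen gK, fgen gL)]"
| "Dgen gLb = [(fgen gLb, fgen gLb), (fgen gLb, fgen gKb), (fgen gKb, fgen gLb)]"
| "Dgen gE = [(fone, fgen gE), (fgen gE, fgen gK + fgen gL)]"
| "Dgen gF = [(fgen gF, fone), (fgen gKb + fgen gLb, fgen gF)]"

text \<open>Delta is an algebra homomorphism: Delta of a word is the product of the Deltas of its letters.\<close>
fun Dword :: "gen list \<Rightarrow> (free \<times> free) list" where
  "Dword [] = [(fone, fone)]"
| "Dword (g # w) = [(fmul a c, fmul b d). (a, b) \<leftarrow> Dgen g, (c, d) \<leftarrow> Dword w]"

text \<open>Convolution A \<star> B = mu \<circ> (A \<otimes> B) \<circ> Delta, for maps given on representatives.\<close>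
definition conv :: "(free \<Rightarrow> free) \<Rightarrow> (free \<Rightarrow> free) \<Rightarrow> free \<Rightarrow> free" where
  "conv A B = flin (\<lambda>u. sum_list (map (\<lambda>(a, b). fmul (A a) (B b)) (Dword u)))"

definition Tgen :: "gen \<Rightarrow> free" where
  "Tgen g = (case g of
      gK \<Rightarrow> fgen gKb | gKb \<Rightarrow> fgen gK | gL \<Rightarrow> fgen gLb | gLb \<Rightarrow> fgen gL
    | gE \<Rightarrow> - fmul (fgen gE) (fgen gKb + fgen gLb)
    | gF \<Rightarrow> - fmul (fgen gK + fgen gL) (fgen gF))"

fun Tword :: "gen list \<Rightarrow> free" where
  "Tword [] = fone"
| "Tword (g # w) = fmul (Tword w) (Tgen g)"

definition Tmap :: "free \<Rightarrow> free" where "Tmap = flin Tword"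

end

theory Submission
  imports Defs
begin

(* Write phi = conv id T and psi = conv T id.

   (1) The relations make e = K Kbar and f = L Lbar complementary idempotents,
       central when q is nonzero; e fixes K and Kbar, f fixes L and Lbar, and
       all mixed products such as K L vanish.
   (2) On the generators K, Kbar, L, Lbar, E, F the maps phi and psi take the
       central values e, e, f, f, 0, 0.  Because Delta is multiplicative and T
       antimultiplicative, phi(g u) = phi(u) phi(g) and psi(g u) = psi(g) psi(u)
       along words, so phi and psi are central-valued and (anti)multiplicative.
   (3) Consequently conv phi id is multiplicative and conv psi T
       antimultiplicative on words, and by (1) they send a generator g to g
       resp. T(g). *)

section \<open>The free algebra as a monoid algebra\<close>

text \<open>Words form a monoid under concatenation; written additively, Poly_Mapping turns
  the type free of finitely supported coefficient functions on words into the
  corresponding monoid algebra, whose product is the free-algebra product.\<close>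

instantiation list :: (type) monoid_add
begin
definition zero_list :: "'a list" where "zero_list = []"
definition plus_list :: "'a list \<Rightarrow> 'a list \<Rightarrow> 'a list" where "plus_list = append"
instance by standard (simp_all add: zero_list_def plus_list_def)
end

abbreviation scal :: "complex \<Rightarrow> free" where "scal c \<equiv> Poly_Mapping.single [] c"

lemma poly_mapping_monomial_sum:
  "(p :: 'a \<Rightarrow>\<^sub>0 'b::comm_monoid_add) =
     (\<Sum>u\<in>Poly_Mapping.keys p. Poly_Mapping.single u (Poly_Mapping.lookup p u))"
  by (rule poly_mapping_eqI) (simp add: lookup_sum lookup_single when_def in_keys_iff)

lemma poly_mapping_linear_induct [case_names zero monomial add]:
  fixes p :: "'a \<Rightarrow>\<^sub>0 'b::comm_monoid_add"
  assumes "P 0" "\<And>w c. P (Poly_Mapping.single w c)" "\<And>a b. P a \<Longrightarrow> P b \<Longrightarrow> P (a + b)"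
  shows "P p"
proof -
  have "P (\<Sum>u\<in>A. Poly_Mapping.single u (Poly_Mapping.lookup p u))" if "finite A" for A
    using that by (induction A rule: finite_induct) (auto intro: assms)
  then show ?thesis by (subst poly_mapping_monomial_sum) simp
qed

lemma single_mult:
  "Poly_Mapping.single u c * Poly_Mapping.single v d = Poly_Mapping.single (u @ v) (c * d)"
  by (simp add: mult_single plus_list_def)

lemma fmul_eq: "fmul p r = p * r"
proof -
  have "fmul p r = (\<Sum>u\<in>Poly_Mapping.keys p. \<Sum>v\<in>Poly_Mapping.keys r.
          Poly_Mapping.single u (Poly_Mapping.lookup p u) * Poly_Mapping.single v (Poly_Mapping.lookup r v))"
    unfolding fmul_def by (simp add: single_mult)
  also have "\<dots> = (\<Sum>u\<in>Poly_Mapping.keys p. Poly_Mapping.single u (Poly_Mapping.lookup p u))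
                 * (\<Sum>v\<in>Poly_Mapping.keys r. Poly_Mapping.single v (Poly_Mapping.lookup r v))"
    by (simp add: sum_product)
  also have "\<dots> = p * r"
    by (simp flip: poly_mapping_monomial_sum)
  finally show ?thesis .
qed

lemma fone_eq: "fone = 1"
  unfolding fone_def by (metis single_one zero_list_def)

lemma scal_one: "scal 1 = 1"
  by (metis single_one zero_list_def)

lemma fsc_eq: "fsc c p = scal c * p"
  by (simp add: fsc_def fmul_eq)

lemma scal_mult: "scal c * scal d = scal (c * d)"
  by (simp add: single_mult)

lemma single_scal: "Poly_Mapping.single w c = scal c * Poly_Mapping.single w 1"
  by (simp add: single_mult)

lemma single_Cons: "Poly_Mapping.single (g # w) c = fgen g * Poly_Mapping.single w c"
  by (simp add: fgen_def single_mult)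

lemma scal_commute: "scal c * (x::free) = x * scal c"
proof (induction x rule: poly_mapping_linear_induct)
  case (add a b) then show ?case by (simp add: algebra_simps)
qed (simp_all add: single_mult mult.commute)

lemma flin_superset:
  assumes "finite S" "Poly_Mapping.keys p \<subseteq> S"
  shows "flin f p = (\<Sum>u\<in>S. scal (Poly_Mapping.lookup p u) * f u)"
  unfolding flin_def fsc_eq
  by (rule sum.mono_neutral_left) (use assms in \<open>auto simp: in_keys_iff\<close>)

lemma flin_add: "flin f (a + b) = flin f a + flin f b"
proof -
  let ?S = "Poly_Mapping.keys a \<union> Poly_Mapping.keys b \<union> Poly_Mapping.keys (a + b)"
  have "flin f (a + b) = (\<Sum>u\<in>?S. scal (Poly_Mapping.lookup (a + b) u) * f u)"
    by (rule flin_superset) auto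
  also have "\<dots> = (\<Sum>u\<in>?S. scal (Poly_Mapping.lookup a u) * f u)
                 + (\<Sum>u\<in>?S. scal (Poly_Mapping.lookup b u) * f u)"
    by (simp add: lookup_add single_add distrib_right sum.distrib)
  also have "\<dots> = flin f a + flin f b"
    by (subst (1 2) flin_superset[symmetric]) auto
  finally show ?thesis .
qed

lemma flin_single: "flin f (Poly_Mapping.single w c) = scal c * f w"
proof -
  have "flin f (Poly_Mapping.single w c)
        = (\<Sum>u\<in>{w}. scal (Poly_Mapping.lookup (Poly_Mapping.single w c) u) * f u)"
    by (rule flin_superset) auto
  then show ?thesis by simp
qed

lemma flin_zero: "flin f 0 = 0"
  by (simp add: flin_def)

lemma flin_uminus: "flin f (- a) = - flin f a"
  by (metis add.inverse_unique add.right_inverse flin_add flin_zero)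

lemma flin_words: "flin (\<lambda>w. Poly_Mapping.single w 1) p = p"
  by (induction p rule: poly_mapping_linear_induct)
     (simp_all add: flin_zero flin_add flin_single flip: single_scal)

lemma Tmap_single: "Tmap (Poly_Mapping.single w c) = scal c * Tword w"
  by (simp add: Tmap_def flin_single)

lemma Tmap_add: "Tmap (a + b) = Tmap a + Tmap b"
  by (simp add: Tmap_def flin_add)

lemma Tmap_zero: "Tmap 0 = 0"
  by (simp add: Tmap_def flin_zero)

lemma Tmap_uminus: "Tmap (- a) = - Tmap a"
  by (simp add: Tmap_def flin_uminus)

lemma Tmap_fgen: "Tmap (fgen g) = Tgen g"
  by (simp add: fgen_def Tmap_single scal_one fmul_eq fone_eq)

lemma Tmap_one: "Tmap 1 = 1"
  using Tmap_single[of "[]" 1] by (simp add: scal_one fone_eq zero_list_def)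

lemma Tword_append: "Tword (u @ v) = Tword v * Tword u"
  by (induction u) (simp_all add: fmul_eq fone_eq mult.assoc)

lemma Tmap_mult: "Tmap (x * y) = Tmap y * Tmap x"
proof (induction x arbitrary: y rule: poly_mapping_linear_induct)
  case zero then show ?case by (simp add: Tmap_zero)
next
  case (add a b) then show ?case by (simp add: Tmap_add algebra_simps)
next
  case (monomial u c)
  show ?case
  proof (induction y rule: poly_mapping_linear_induct)
    case zero then show ?case by (simp add: Tmap_zero)
  next
    case (add a b) then show ?case by (simp add: Tmap_add algebra_simps)
  next
    case (monomial v d)
    have "Tmap (Poly_Mapping.single u c * Poly_Mapping.single v d) = scal (c * d) * (Tword v * Tword u)"
      by (simp add: single_mult Tmap_single Tword_append)
    also have "\<dots> = scal d * (scal c * Tword v) * Tword u"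
      by (simp add: mult.commute[of c d] mult.assoc flip: scal_mult)
    also have "\<dots> = (scal d * Tword v) * (scal c * Tword u)"
      by (subst scal_commute[of c "Tword v"]) (simp add: mult.assoc)
    finally show ?case by (simp add: Tmap_single)
  qed
qed

definition conv_word :: "(free \<Rightarrow> free) \<Rightarrow> (free \<Rightarrow> free) \<Rightarrow> gen list \<Rightarrow> free" where
  "conv_word A B w = sum_list (map (\<lambda>(a, b). A a * B b) (Dword w))"

lemma conv_eq: "conv A B = flin (conv_word A B)"
  by (simp add: conv_def conv_word_def[abs_def] fmul_eq)

lemma conv_single: "conv A B (Poly_Mapping.single w c) = scal c * conv_word A B w"
  by (simp add: conv_eq flin_single)

lemma conv_add: "conv A B (a + b) = conv A B a + conv A B b"
  by (simp add: conv_eq flin_add)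

lemma conv_zero: "conv A B 0 = 0"
  by (simp add: conv_eq flin_zero)

lemma conv_word_Nil: "conv_word A B [] = A 1 * B 1"
  by (simp add: conv_word_def fone_eq)

lemma sum_list_concat: "sum_list (concat xss) = sum_list (map sum_list (xss :: 'a::monoid_add list list))"
  by (induction xss) simp_all

text \<open>Multiplicativity of Delta, unfolded at the first letter of a word.\<close>
lemma conv_word_Cons:
  "conv_word A B (g # u) = sum_list (map (\<lambda>(a, b).
     sum_list (map (\<lambda>(c, d). A (a * c) * B (b * d)) (Dword u))) (Dgen g))"
  by (simp add: conv_word_def fmul_eq sum_list_concat map_concat comp_def split_def)

lemma conv_fgen: "conv A B (fgen g) = sum_list (map (\<lambda>(a, b). A a * B b) (Dgen g))"
  by (simp add: fgen_def conv_single scal_one conv_word_Cons fone_eq split_def)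

lemma sum_list_swap:
  fixes f :: "'a \<Rightarrow> 'b \<Rightarrow> 'c::comm_monoid_add"
  shows "sum_list (map (\<lambda>x. sum_list (map (f x) ys)) xs)
       = sum_list (map (\<lambda>y. sum_list (map (\<lambda>x. f x y) xs)) ys)"
proof (induction xs)
  case (Cons a xs)
  then show ?case by (simp add: sum_list_addf)
qed simp

lemma sum_list_mult_both: "sum_list (map (\<lambda>x. a * f x * b) xs) = a * sum_list (map f xs) * (b::free)"
  by (induction xs) (simp_all add: algebra_simps)

section \<open>Congruence modulo the defining ideal\<close>

lemma ideal_U_mult: "a \<in> ideal_U q \<Longrightarrow> x * a * y \<in> ideal_U q"
  using ideal_U.mult[of a q x y] by (simp add: fmul_eq mult.assoc)

lemma ideal_U_uminus: "a \<in> ideal_U q \<Longrightarrow> - a \<in> ideal_U q"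
  using ideal_U_mult[of a q "-1" 1] by simp

lemma eqU_refl [simp]: "eqU q a a"
  by (simp add: eqU_def ideal_U.zero)

lemma eqU_sym: "eqU q a b \<Longrightarrow> eqU q b a"
  unfolding eqU_def using ideal_U_uminus by fastforce

lemma eqU_trans [trans]: "eqU q a b \<Longrightarrow> eqU q b c \<Longrightarrow> eqU q a c"
  unfolding eqU_def using ideal_U.add by fastforce

lemma eqU_add: "eqU q a a' \<Longrightarrow> eqU q b b' \<Longrightarrow> eqU q (a + b) (a' + b')"
  unfolding eqU_def using ideal_U.add by (fastforce simp: algebra_simps)

lemma eqU_uminus: "eqU q a a' \<Longrightarrow> eqU q (- a) (- a')"
  unfolding eqU_def using ideal_U_uminus by fastforce

lemma eqU_diff: "eqU q a a' \<Longrightarrow> eqU q b b' \<Longrightarrow> eqU q (a - b) (a' - b')"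
  using eqU_add[of q a a' "- b" "- b'"] eqU_uminus[of q b b'] by simp

lemma eqU_ctx: "eqU q a b \<Longrightarrow> eqU q (x * a * y) (x * b * y)"
  unfolding eqU_def using ideal_U_mult[of "a - b" q x y] by (simp add: algebra_simps)

lemma eqU_l: "eqU q a b \<Longrightarrow> eqU q (x * a) (x * b)"
  using eqU_ctx[of q a b x 1] by simp

lemma eqU_r: "eqU q a b \<Longrightarrow> eqU q (a * y) (b * y)"
  using eqU_ctx[of q a b 1 y] by simp

lemma eqU_mult: "eqU q a a' \<Longrightarrow> eqU q b b' \<Longrightarrow> eqU q (a * b) (a' * b')"
  using eqU_r[of q a a' b] eqU_l[of q b b' a'] eqU_trans by blast

lemma eqU_sum_list:
  "(\<And>x. x \<in> set xs \<Longrightarrow> eqU q (f x) (g x)) \<Longrightarrow> eqU q (sum_list (map f xs)) (sum_list (map g xs))"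
  by (induction xs) (simp_all add: eqU_add)

lemma eqU_flin: "(\<And>w. eqU q (f w) (g w)) \<Longrightarrow> eqU q (flin f p) (flin g p)"
  by (induction p rule: poly_mapping_linear_induct)
     (simp_all add: flin_zero flin_add flin_single eqU_add eqU_l)

definition cen :: "complex \<Rightarrow> free \<Rightarrow> bool" where
  "cen q z \<longleftrightarrow> (\<forall>x. eqU q (x * z) (z * x))"

lemma cenD: "cen q z \<Longrightarrow> eqU q (x * z) (z * x)"
  by (simp add: cen_def)

lemma cen_cong: "eqU q a b \<Longrightarrow> cen q b \<Longrightarrow> cen q a"
  unfolding cen_def by (meson eqU_l eqU_r eqU_sym eqU_trans)

lemma cen_mult: "cen q a \<Longrightarrow> cen q b \<Longrightarrow> cen q (a * b)"
  unfolding cen_def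
proof safe
  fix x assume a: "\<forall>x. eqU q (x * a) (a * x)" and b: "\<forall>x. eqU q (x * b) (b * x)"
  have "eqU q (x * (a * b)) (a * x * b)"
    using eqU_r[OF a[rule_format, of x], of b] by (simp add: mult.assoc)
  also have "eqU q (a * x * b) (a * b * x)"
    using eqU_l[OF b[rule_format, of x], of a] by (simp add: mult.assoc)
  finally show "eqU q (x * (a * b)) (a * b * x)" .
qed

lemma cen_add: "cen q a \<Longrightarrow> cen q b \<Longrightarrow> cen q (a + b)"
  unfolding cen_def using eqU_add by (fastforce simp: algebra_simps)

lemma cen_diff: "cen q a \<Longrightarrow> cen q b \<Longrightarrow> cen q (a - b)"
  unfolding cen_def using eqU_diff by (fastforce simp: algebra_simps)

lemma cen_one: "cen q 1"
  by (simp add: cen_def)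

lemma cen_zero: "cen q 0"
  by (simp add: cen_def)

lemma cen_scal: "cen q (scal c)"
  by (simp add: cen_def scal_commute)

lemma cen_flin: "(\<And>w. cen q (f w)) \<Longrightarrow> cen q (flin f p)"
  by (induction p rule: poly_mapping_linear_induct)
     (simp_all add: flin_zero flin_add flin_single cen_zero cen_add cen_mult cen_scal)

lemma cen_gens:
  assumes gens: "\<And>g. eqU q (fgen g * z) (z * fgen g)"
  shows "cen q z"
  unfolding cen_def
proof
  fix x
  have words: "eqU q (Poly_Mapping.single w 1 * z) (z * Poly_Mapping.single w 1)" for w
  proof (induction w)
    case Nil then show ?case by (simp add: scal_one)
  next
    case (Cons g w)
    have "eqU q (fgen g * Poly_Mapping.single w 1 * z) (fgen g * z * Poly_Mapping.single w 1)"
      using eqU_l[OF Cons, of "fgen g"] by (simp add: mult.assoc)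
    also have "eqU q (fgen g * z * Poly_Mapping.single w 1) (z * fgen g * Poly_Mapping.single w 1)"
      using eqU_r[OF gens[of g]] by simp
    finally show ?case by (simp add: single_Cons mult.assoc)
  qed
  show "eqU q (x * z) (z * x)"
  proof (induction x rule: poly_mapping_linear_induct)
    case (monomial w c)
    have "eqU q (scal c * Poly_Mapping.single w 1 * z) (scal c * (z * Poly_Mapping.single w 1))"
      using eqU_l[OF words[of w], of "scal c"] by (simp add: mult.assoc)
    also have "scal c * (z * Poly_Mapping.single w 1) = z * (scal c * Poly_Mapping.single w 1)"
      by (metis mult.assoc scal_commute)
    finally show ?case by (simp flip: single_scal)
  next
    case (add a b) then show ?case using eqU_add by (fastforce simp: algebra_simps)
  qed simp
qed

section \<open>Consequences of the defining relations\<close>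

abbreviation "XK \<equiv> fgen gK"
abbreviation "XKb \<equiv> fgen gKb"
abbreviation "XL \<equiv> fgen gL"
abbreviation "XLb \<equiv> fgen gLb"
abbreviation "XE \<equiv> fgen gE"
abbreviation "XF \<equiv> fgen gF"

abbreviation "eK \<equiv> XK * XKb"
abbreviation "eL \<equiv> XL * XLb"

context
  fixes q :: complex
begin

abbreviation eqq (infix "\<approx>" 50) where "a \<approx> b \<equiv> eqU q a b"

lemma relI: "a - b \<in> rels q \<Longrightarrow> a \<approx> b"
  unfolding eqU_def using ideal_U.gen_rel by blast

text \<open>The defining relations used in the argument.\<close>
lemma relations:
  shows rel_KKbK: "XK * XKb * XK \<approx> XK"
    and rel_KbKKb: "XKb * XK * XKb \<approx> XKb"
    and rel_KKb_comm: "XK * XKb \<approx> XKb * XK"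
    and rel_LLbL: "XL * XLb * XL \<approx> XL"
    and rel_LbLLb: "XLb * XL * XLb \<approx> XLb"
    and rel_LLb_comm: "XL * XLb \<approx> XLb * XL"
    and rel_sum_one: "eK + eL \<approx> 1"
    and rel_KE: "XK * XE \<approx> scal (q^2) * (XE * XK)"
    and rel_KbE: "XKb * XE \<approx> scal (q powi -2) * (XE * XKb)"
    and rel_KF: "XK * XF \<approx> scal (q powi -2) * (XF * XK)"
    and rel_KbF: "XKb * XF \<approx> scal (q^2) * (XF * XKb)"
  by (rule relI, simp add: rels_def Let_def fmul_eq fsc_eq fone_eq mult.assoc)+

lemma eK_K: "eK * XK \<approx> XK"
  using rel_KKbK .

lemma K_eK: "XK * eK \<approx> XK"
proof -
  have "XK * eK \<approx> XK * (XKb * XK)" using eqU_l[OF rel_KKb_comm] by (simp add: mult.assoc)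
  also have "\<dots> \<approx> XK" using rel_KKbK by (simp add: mult.assoc)
  finally show ?thesis .
qed

lemma Kb_eK: "XKb * eK \<approx> XKb"
  using rel_KbKKb by (simp add: mult.assoc)

lemma eK_Kb: "eK * XKb \<approx> XKb"
  using eqU_trans[OF eqU_r[OF rel_KKb_comm] rel_KbKKb] by simp

lemma eL_L: "eL * XL \<approx> XL"
  using rel_LLbL .

lemma L_eL: "XL * eL \<approx> XL"
proof -
  have "XL * eL \<approx> XL * (XLb * XL)" using eqU_l[OF rel_LLb_comm] by (simp add: mult.assoc)
  also have "\<dots> \<approx> XL" using rel_LLbL by (simp add: mult.assoc)
  finally show ?thesis .
qed

lemma Lb_eL: "XLb * eL \<approx> XLb"
  using rel_LbLLb by (simp add: mult.assoc)

lemma eL_Lb: "eL * XLb \<approx> XLb"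
  using eqU_trans[OF eqU_r[OF rel_LLb_comm] rel_LbLLb] by simp

lemma eK_idem: "eK * eK \<approx> eK"
  using eqU_r[OF eK_K, of XKb] by (simp add: mult.assoc)

lemma eL_eq: "eL \<approx> 1 - eK"
  using eqU_diff[OF rel_sum_one eqU_refl, of eK] by simp

text \<open>e and f are orthogonal: f = 1 - e and e is idempotent.\<close>
lemma eK_eL_zero: "eK * eL \<approx> 0"
proof -
  have "eK * eL \<approx> eK * (1 - eK)" using eqU_l[OF eL_eq] .
  also have "\<dots> = eK - eK * eK" by (simp add: algebra_simps)
  also have "\<dots> \<approx> eK - eK" using eqU_diff[OF eqU_refl eK_idem] .
  finally show ?thesis by simp
qed

lemma eL_eK_zero: "eL * eK \<approx> 0"
proof -
  have "eL * eK \<approx> (1 - eK) * eK" using eqU_r[OF eL_eq] .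
  also have "\<dots> = eK - eK * eK" by (simp add: algebra_simps)
  also have "\<dots> \<approx> eK - eK" using eqU_diff[OF eqU_refl eK_idem] .
  finally show ?thesis by simp
qed

definition K_corner :: "free \<Rightarrow> bool" where "K_corner x \<longleftrightarrow> eK * x \<approx> x \<and> x * eK \<approx> x"
definition L_corner :: "free \<Rightarrow> bool" where "L_corner y \<longleftrightarrow> eL * y \<approx> y \<and> y * eL \<approx> y"

lemma K_corner_gens: "K_corner XK" "K_corner XKb"
  by (simp_all add: K_corner_def eK_K K_eK eK_Kb Kb_eK)

lemma L_corner_gens: "L_corner XL" "L_corner XLb"
  by (simp_all add: L_corner_def eL_L L_eL eL_Lb Lb_eL)

lemma corners_orthogonal:
  assumes "K_corner x" "L_corner y"
  shows "x * y \<approx> 0" "y * x \<approx> 0" "eL * x \<approx> 0" "eK * y \<approx> 0" "y * eK \<approx> 0"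
proof -
  have fixed: "eK * x \<approx> x" "x * eK \<approx> x" "eL * y \<approx> y" "y * eL \<approx> y"
    using assms by (simp_all add: K_corner_def L_corner_def)
  note x = fixed(1,2)[THEN eqU_sym] and y = fixed(3,4)[THEN eqU_sym]
  have "x * y \<approx> (x * eK) * (eL * y)" using eqU_mult[OF x(2) y(1)] .
  also have "\<dots> = x * (eK * eL) * y" by (simp add: mult.assoc)
  also have "\<dots> \<approx> x * 0 * y" using eqU_ctx[OF eK_eL_zero] .
  finally show "x * y \<approx> 0" by simp
  have "y * x \<approx> (y * eL) * (eK * x)" using eqU_mult[OF y(2) x(1)] .
  also have "\<dots> = y * (eL * eK) * x" by (simp add: mult.assoc)
  also have "\<dots> \<approx> y * 0 * x" using eqU_ctx[OF eL_eK_zero] .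
  finally show "y * x \<approx> 0" by simp
  have "eL * x \<approx> eL * (eK * x)" using eqU_l[OF x(1)] .
  also have "\<dots> = (eL * eK) * x" by (simp add: mult.assoc)
  also have "\<dots> \<approx> 0 * x" using eqU_r[OF eL_eK_zero] .
  finally show "eL * x \<approx> 0" by simp
  have "eK * y \<approx> eK * (eL * y)" using eqU_l[OF y(1)] .
  also have "\<dots> = (eK * eL) * y" by (simp add: mult.assoc)
  also have "\<dots> \<approx> 0 * y" using eqU_r[OF eK_eL_zero] .
  finally show "eK * y \<approx> 0" by simp
  have "y * eK \<approx> (y * eL) * eK" using eqU_r[OF y(2)] .
  also have "\<dots> = y * (eL * eK)" by (simp add: mult.assoc)
  also have "\<dots> \<approx> y * 0" using eqU_l[OF eL_eK_zero] .
  finally show "y * eK \<approx> 0" by simp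
qed

lemmas mixed_zero =
  corners_orthogonal[OF K_corner_gens(1) L_corner_gens(1)]
  corners_orthogonal[OF K_corner_gens(1) L_corner_gens(2)]
  corners_orthogonal[OF K_corner_gens(2) L_corner_gens(1)]
  corners_orthogonal[OF K_corner_gens(2) L_corner_gens(2)]

lemma KL_bar_inverse: "(XKb + XLb) * (XK + XL) \<approx> 1"
proof -
  have "(XKb + XLb) * (XK + XL) = XKb * XK + (XKb * XL + (XLb * XK + XLb * XL))"
    by (simp add: algebra_simps)
  also have "\<dots> \<approx> eK + (0 + (0 + eL))"
    by (intro eqU_add mixed_zero eqU_sym[OF rel_KKb_comm] eqU_sym[OF rel_LLb_comm])
  also have "\<dots> \<approx> 1" using rel_sum_one by simp
  finally show ?thesis .
qed

text \<open>e is central; here the q-commutation relations of K, Kbar with E, F and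
  q \<noteq> 0 are used: the factors q^2 and q^-2 cancel.\<close>
lemma cen_eK:
  assumes "q \<noteq> 0"
  shows "cen q eK"
proof (rule cen_gens)
  have q_cancel: "scal (q powi -2) * scal (q^2) = 1" "scal (q^2) * scal (q powi -2) = 1"
    using assms by (simp_all add: scal_mult power_int_minus scal_one)
  have common: "a \<approx> b" if "a \<approx> c" "b \<approx> c" for a b c
    using eqU_trans[OF that(1) eqU_sym[OF that(2)]] .
  fix g
  show "fgen g * eK \<approx> eK * fgen g"
  proof (cases g)
    case gK then show ?thesis using common[OF K_eK eK_K] by simp
  next
    case gKb then show ?thesis using common[OF Kb_eK eK_Kb] by simp
  next
    case gL then show ?thesis
      using common[OF corners_orthogonal(5,4)[OF K_corner_gens(1) L_corner_gens(1)]] by simp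
  next
    case gLb then show ?thesis
      using common[OF corners_orthogonal(5,4)[OF K_corner_gens(1) L_corner_gens(2)]] by simp
  next
    case gE
    have "eK * XE \<approx> XK * (scal (q powi -2) * (XE * XKb))"
      using eqU_l[OF rel_KbE, of XK] by (simp add: mult.assoc)
    also have "\<dots> = scal (q powi -2) * (XK * XE) * XKb" by (metis mult.assoc scal_commute)
    also have "\<dots> \<approx> scal (q powi -2) * (scal (q^2) * (XE * XK)) * XKb" using eqU_ctx[OF rel_KE] .
    also have "\<dots> = (scal (q powi -2) * scal (q^2)) * (XE * eK)" by (simp add: mult.assoc)
    also have "\<dots> = XE * eK" using q_cancel by simp
    finally show ?thesis using gE by (simp add: eqU_sym)
  next
    case gF
    have "eK * XF \<approx> XK * (scal (q^2) * (XF * XKb))"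
      using eqU_l[OF rel_KbF, of XK] by (simp add: mult.assoc)
    also have "\<dots> = scal (q^2) * (XK * XF) * XKb" by (metis mult.assoc scal_commute)
    also have "\<dots> \<approx> scal (q^2) * (scal (q powi -2) * (XF * XK)) * XKb" using eqU_ctx[OF rel_KF] .
    also have "\<dots> = (scal (q^2) * scal (q powi -2)) * (XF * eK)" by (simp add: mult.assoc)
    also have "\<dots> = XF * eK" using q_cancel by simp
    finally show ?thesis using gF by (simp add: eqU_sym)
  qed
qed

lemma cen_eL: "q \<noteq> 0 \<Longrightarrow> cen q eL"
  by (rule cen_cong[OF eL_eq]) (intro cen_diff cen_one cen_eK)

section \<open>The convolutions phi = id * T and psi = T * id on generators\<close>

abbreviation phi :: "free \<Rightarrow> free" where "phi \<equiv> conv id Tmap"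
abbreviation psi :: "free \<Rightarrow> free" where "psi \<equiv> conv Tmap id"

definition corner_idem :: "gen \<Rightarrow> free" where
  "corner_idem g = (case g of gK \<Rightarrow> eK | gKb \<Rightarrow> eK | gL \<Rightarrow> eL | gLb \<Rightarrow> eL | _ \<Rightarrow> 0)"

lemma cen_corner_idem: "q \<noteq> 0 \<Longrightarrow> cen q (corner_idem g)"
  by (cases g) (simp_all add: corner_idem_def cen_eK cen_eL cen_zero)

lemmas gen_simps = conv_fgen Tmap_add Tmap_fgen Tgen_def fmul_eq fone_eq Tmap_one Tmap_uminus

lemma phi_one: "phi 1 = 1"
  using conv_single[of id Tmap "[]" 1] by (simp add: conv_word_Nil scal_one Tmap_one)

lemma psi_one: "psi 1 = 1"
  using conv_single[of Tmap id "[]" 1] by (simp add: conv_word_Nil scal_one Tmap_one)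

lemma phi_gen: "phi (fgen g) \<approx> corner_idem g"
proof (cases g)
  case gL
  have "phi XL = eL + (XL * XKb + XK * XLb)" by (simp add: gen_simps)
  also have "\<dots> \<approx> eL + (0 + 0)" by (intro eqU_add mixed_zero eqU_refl)
  finally show ?thesis using gL by (simp add: corner_idem_def)
next
  case gLb
  have "phi XLb = XLb * XL + (XLb * XK + XKb * XL)" by (simp add: gen_simps)
  also have "\<dots> \<approx> eL + (0 + 0)" by (intro eqU_add mixed_zero eqU_sym[OF rel_LLb_comm])
  finally show ?thesis using gLb by (simp add: corner_idem_def)
next
  case gF
  have "phi XF = XF - ((XKb + XLb) * (XK + XL)) * XF" by (simp add: gen_simps mult.assoc)
  also have "\<dots> \<approx> XF - 1 * XF" by (intro eqU_diff eqU_r KL_bar_inverse eqU_refl)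
  finally show ?thesis using gF by (simp add: corner_idem_def)
qed (simp_all add: corner_idem_def gen_simps eqU_sym[OF rel_KKb_comm])

lemma psi_gen: "psi (fgen g) \<approx> corner_idem g"
proof (cases g)
  case gL
  have "psi XL = XLb * XL + (XLb * XK + XKb * XL)" by (simp add: gen_simps)
  also have "\<dots> \<approx> eL + (0 + 0)" by (intro eqU_add mixed_zero eqU_sym[OF rel_LLb_comm])
  finally show ?thesis using gL by (simp add: corner_idem_def)
next
  case gLb
  have "psi XLb = eL + (XL * XKb + XK * XLb)" by (simp add: gen_simps)
  also have "\<dots> \<approx> eL + (0 + 0)" by (intro eqU_add mixed_zero eqU_refl)
  finally show ?thesis using gLb by (simp add: corner_idem_def)
next
  case gE
  have "psi XE = XE - XE * ((XKb + XLb) * (XK + XL))" by (simp add: gen_simps mult.assoc)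
  also have "\<dots> \<approx> XE - XE * 1" by (intro eqU_diff eqU_l KL_bar_inverse eqU_refl)
  finally show ?thesis using gE by (simp add: corner_idem_def)
qed (simp_all add: corner_idem_def gen_simps eqU_sym[OF rel_KKb_comm])

text \<open>Delta is multiplicative and T antimultiplicative, so on a word g u the
  convolution phi sandwiches phi(u) between the two tensor factors of Delta(g),
  while psi puts psi(g) between those of Delta(u).\<close>
lemma phi_word_Cons_exact:
  "conv_word id Tmap (g # u) = sum_list (map (\<lambda>(a, b). a * conv_word id Tmap u * Tmap b) (Dgen g))"
proof -
  have "sum_list (map (\<lambda>(c, d). id (a * c) * Tmap (b * d)) (Dword u)) = a * conv_word id Tmap u * Tmap b"
    for a b
  proof -
    have "(\<lambda>(c, d). id (a * c) * Tmap (b * d)) = (\<lambda>x. a * (case x of (c, d) \<Rightarrow> id c * Tmap d) * Tmap b)"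
      by (auto simp: Tmap_mult mult.assoc)
    then show ?thesis by (simp only: sum_list_mult_both conv_word_def)
  qed
  then show ?thesis by (simp add: conv_word_Cons)
qed

lemma psi_word_Cons_exact:
  "conv_word Tmap id (g # u) = sum_list (map (\<lambda>(c, d). Tmap c * psi (fgen g) * d) (Dword u))"
proof -
  have "conv_word Tmap id (g # u) = sum_list (map (\<lambda>(a, b). sum_list (map (\<lambda>(c, d).
          Tmap c * (Tmap a * b) * d) (Dword u))) (Dgen g))"
    by (simp add: conv_word_Cons Tmap_mult mult.assoc)
  also have "\<dots> = sum_list (map (\<lambda>(c, d). sum_list (map (\<lambda>(a, b).
          Tmap c * (Tmap a * b) * d) (Dgen g))) (Dword u))"
    using sum_list_swap[of "\<lambda>x y. (case y of (c, d) \<Rightarrow> Tmap c * (case x of (a, b) \<Rightarrow> Tmap a * b) * d)"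
        "Dword u" "Dgen g"]
    by (simp add: split_def)
  also have "\<dots> = sum_list (map (\<lambda>(c, d). Tmap c * psi (fgen g) * d) (Dword u))"
    by (simp add: conv_fgen sum_list_mult_both[symmetric] split_def)
  finally show ?thesis .
qed

context
  assumes q_nonzero: "q \<noteq> 0"
begin

lemma cen_phi_gen: "cen q (phi (fgen g))"
  using cen_cong[OF phi_gen cen_corner_idem[OF q_nonzero]] .

lemma cen_psi_gen: "cen q (psi (fgen g))"
  using cen_cong[OF psi_gen cen_corner_idem[OF q_nonzero]] .

lemma phi_word_Cons_central:
  assumes "cen q (conv_word id Tmap u)"
  shows "conv_word id Tmap (g # u) \<approx> conv_word id Tmap u * phi (fgen g)"
proof -
  have "conv_word id Tmap (g # u)
        \<approx> sum_list (map (\<lambda>(a, b). conv_word id Tmap u * a * Tmap b) (Dgen g))"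
    unfolding phi_word_Cons_exact
    by (rule eqU_sum_list) (auto intro: eqU_r cenD[OF assms])
  also have "\<dots> = conv_word id Tmap u * phi (fgen g)"
    by (simp add: conv_fgen sum_list_mult_both[where b=1, simplified, symmetric] split_def mult.assoc)
  finally show ?thesis .
qed

lemma cen_phi_word: "cen q (conv_word id Tmap w)"
proof (induction w)
  case Nil then show ?case by (simp add: conv_word_Nil Tmap_one cen_one)
next
  case (Cons g u)
  show ?case by (rule cen_cong[OF phi_word_Cons_central[OF Cons]]) (intro cen_mult Cons cen_phi_gen)
qed

lemma phi_word_Cons: "conv_word id Tmap (g # u) \<approx> conv_word id Tmap u * phi (fgen g)"
  using phi_word_Cons_central[OF cen_phi_word] .

lemma psi_word_Cons: "conv_word Tmap id (g # u) \<approx> psi (fgen g) * conv_word Tmap id u"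
proof -
  have "conv_word Tmap id (g # u) \<approx> sum_list (map (\<lambda>(c, d). psi (fgen g) * Tmap c * d) (Dword u))"
    unfolding psi_word_Cons_exact
    by (rule eqU_sum_list) (auto intro: eqU_r cenD[OF cen_psi_gen])
  also have "\<dots> = psi (fgen g) * conv_word Tmap id u"
    by (simp add: conv_word_def sum_list_mult_both[where b=1, simplified, symmetric] split_def mult.assoc)
  finally show ?thesis .
qed

lemma cen_psi_word: "cen q (conv_word Tmap id w)"
proof (induction w)
  case Nil then show ?case by (simp add: conv_word_Nil Tmap_one cen_one)
next
  case (Cons g u)
  show ?case by (rule cen_cong[OF psi_word_Cons]) (intro cen_mult Cons cen_psi_gen)
qed

lemma cen_phi: "cen q (phi x)"
  unfolding conv_eq by (rule cen_flin[OF cen_phi_word])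

lemma cen_psi: "cen q (psi x)"
  unfolding conv_eq by (rule cen_flin[OF cen_psi_word])

lemma phi_fgen_mult: "phi (fgen h * x) \<approx> phi x * phi (fgen h)"
proof (induction x rule: poly_mapping_linear_induct)
  case zero then show ?case by (simp add: conv_zero)
next
  case (monomial w c)
  have "phi (fgen h * Poly_Mapping.single w c) = scal c * conv_word id Tmap (h # w)"
    by (simp add: conv_single flip: single_Cons)
  also have "\<dots> \<approx> scal c * (conv_word id Tmap w * phi (fgen h))" using eqU_l[OF phi_word_Cons] .
  also have "\<dots> = phi (Poly_Mapping.single w c) * phi (fgen h)"
    by (simp add: conv_single mult.assoc)
  finally show ?case .
next
  case (add a b) then show ?case by (simp add: conv_add distrib_left distrib_right eqU_add)
qed

lemma psi_fgen_mult: "psi (fgen h * x) \<approx> psi (fgen h) * psi x"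
proof (induction x rule: poly_mapping_linear_induct)
  case zero then show ?case by (simp add: conv_zero)
next
  case (monomial w c)
  have "psi (fgen h * Poly_Mapping.single w c) = scal c * conv_word Tmap id (h # w)"
    by (simp add: conv_single flip: single_Cons)
  also have "\<dots> \<approx> scal c * (psi (fgen h) * conv_word Tmap id w)" using eqU_l[OF psi_word_Cons] .
  also have "\<dots> = psi (fgen h) * psi (Poly_Mapping.single w c)"
    by (simp add: conv_single) (metis mult.assoc scal_commute)
  finally show ?case .
next
  case (add a b) then show ?case by (simp add: conv_add distrib_left distrib_right eqU_add)
qed

text \<open>The left tensor factors of Delta(g) are 1, generators, or sums of two
  generators, so the same holds for them.\<close>
lemma phi_Dgen_mult:
  assumes "(a, b) \<in> set (Dgen g)"
  shows "phi (a * x) \<approx> phi x * phi a"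
proof -
  have sum2: "phi ((fgen h + fgen h') * x) \<approx> phi x * phi (fgen h + fgen h')" for h h'
    by (simp add: distrib_left distrib_right conv_add eqU_add phi_fgen_mult)
  show ?thesis
    using assms by (cases g) (auto intro: phi_fgen_mult sum2 simp: fone_eq phi_one)
qed

lemma psi_Dgen_mult:
  assumes "(a, b) \<in> set (Dgen g)"
  shows "psi (a * x) \<approx> psi a * psi x"
proof -
  have sum2: "psi ((fgen h + fgen h') * x) \<approx> psi (fgen h + fgen h') * psi x" for h h'
    by (simp add: distrib_left distrib_right conv_add eqU_add psi_fgen_mult)
  show ?thesis
    using assms by (cases g) (auto intro: psi_fgen_mult sum2 simp: fone_eq psi_one)
qed

section \<open>The convolutions phi * id and psi * T\<close>

text \<open>Since phi is central and antimultiplicative, phi * id is multiplicative along words.\<close>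
lemma phi_id_word_Cons: "conv_word phi id (g # u) \<approx> conv phi id (fgen g) * conv_word phi id u"
proof -
  have "conv_word phi id (g # u) \<approx> sum_list (map (\<lambda>(a, b). sum_list (map (\<lambda>(c, d).
          (phi a * b) * (phi c * d)) (Dword u))) (Dgen g))"
    unfolding conv_word_Cons
  proof (rule eqU_sum_list, clarify, rule eqU_sum_list, clarify)
    fix a b c d assume ab: "(a, b) \<in> set (Dgen g)"
    have "phi (a * c) * id (b * d) \<approx> (phi c * phi a) * (b * d)"
      using eqU_r[OF phi_Dgen_mult[OF ab]] by simp
    also have "\<dots> = phi c * (phi a * b) * d" by (simp add: mult.assoc)
    also have "\<dots> \<approx> (phi a * b) * phi c * d" using eqU_r[OF eqU_sym[OF cenD[OF cen_phi]]] .
    finally show "phi (a * c) * id (b * d) \<approx> (phi a * b) * (phi c * d)" by (simp only: mult.assoc)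
  qed
  also have "\<dots> = conv phi id (fgen g) * conv_word phi id u"
    by (simp add: conv_fgen conv_word_def split_def sum_list_const_mult sum_list_mult_const)
  finally show ?thesis .
qed

text \<open>Since psi is central and multiplicative and T antimultiplicative, psi * T is
  antimultiplicative along words.\<close>
lemma psi_T_word_Cons: "conv_word psi Tmap (g # u) \<approx> conv_word psi Tmap u * conv psi Tmap (fgen g)"
proof -
  have "conv_word psi Tmap (g # u) \<approx> sum_list (map (\<lambda>(a, b). sum_list (map (\<lambda>(c, d).
          (psi c * Tmap d) * (psi a * Tmap b)) (Dword u))) (Dgen g))"
    unfolding conv_word_Cons
  proof (rule eqU_sum_list, clarify, rule eqU_sum_list, clarify)
    fix a b c d assume ab: "(a, b) \<in> set (Dgen g)"
    have "psi (a * c) * Tmap (b * d) \<approx> (psi a * psi c) * (Tmap d * Tmap b)"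
      using eqU_r[OF psi_Dgen_mult[OF ab]] by (simp add: Tmap_mult)
    also have "\<dots> = psi a * (psi c * Tmap d) * Tmap b" by (simp add: mult.assoc)
    also have "\<dots> \<approx> (psi c * Tmap d) * psi a * Tmap b" using eqU_r[OF eqU_sym[OF cenD[OF cen_psi]]] .
    finally show "psi (a * c) * Tmap (b * d) \<approx> (psi c * Tmap d) * (psi a * Tmap b)"
      by (simp only: mult.assoc)
  qed
  also have "\<dots> = conv_word psi Tmap u * conv psi Tmap (fgen g)"
    by (simp add: conv_fgen conv_word_def split_def sum_list_const_mult sum_list_mult_const)
  finally show ?thesis .
qed

text \<open>On generators, phi * id is the identity: the idempotent attached to each
  tensor factor fixes the generator in the other factor or kills it.\<close>
lemma phi_id_gen: "conv phi id (fgen g) \<approx> fgen g"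
proof -
  note phi = phi_gen[of gK] phi_gen[of gKb] phi_gen[of gL] phi_gen[of gLb] phi_gen[of gE] phi_gen[of gF]
  show ?thesis
  proof (cases g)
    case gK
    have "conv phi id XK \<approx> eK * XK" using eqU_r[OF phi(1)] by (simp add: conv_fgen corner_idem_def)
    then show ?thesis using gK eqU_trans[OF _ eK_K] by simp
  next
    case gKb
    have "conv phi id XKb \<approx> eK * XKb" using eqU_r[OF phi(2)] by (simp add: conv_fgen corner_idem_def)
    then show ?thesis using gKb eqU_trans[OF _ eK_Kb] by simp
  next
    case gL
    have "conv phi id XL = phi XL * XL + (phi XL * XK + phi XK * XL)" by (simp add: conv_fgen)
    also have "\<dots> \<approx> eL * XL + (eL * XK + eK * XL)"
      using phi(1,3) by (intro eqU_add eqU_r) (simp_all add: corner_idem_def)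
    also have "\<dots> \<approx> XL + (0 + 0)" by (intro eqU_add eL_L mixed_zero)
    finally show ?thesis using gL by simp
  next
    case gLb
    have "conv phi id XLb = phi XLb * XLb + (phi XLb * XKb + phi XKb * XLb)" by (simp add: conv_fgen)
    also have "\<dots> \<approx> eL * XLb + (eL * XKb + eK * XLb)"
      using phi(2,4) by (intro eqU_add eqU_r) (simp_all add: corner_idem_def)
    also have "\<dots> \<approx> XLb + (0 + 0)" by (intro eqU_add eL_Lb mixed_zero)
    finally show ?thesis using gLb by simp
  next
    case gE
    have "conv phi id XE = phi 1 * XE + phi XE * (XK + XL)" by (simp add: conv_fgen fone_eq)
    also have "\<dots> \<approx> 1 * XE + 0 * (XK + XL)"
      using phi(5) by (intro eqU_add eqU_r) (simp_all add: phi_one corner_idem_def)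
    finally show ?thesis using gE by simp
  next
    case gF
    have "conv phi id XF = phi XF * 1 + (phi XKb + phi XLb) * XF" by (simp add: conv_fgen fone_eq conv_add)
    also have "\<dots> \<approx> 0 * 1 + (eK + eL) * XF"
      using phi(2,4,6) by (intro eqU_add eqU_r) (simp_all add: corner_idem_def)
    also have "\<dots> \<approx> 0 * 1 + 1 * XF" by (intro eqU_add eqU_r rel_sum_one eqU_refl)
    finally show ?thesis using gF by simp
  qed
qed

lemma psi_T_gen: "conv psi Tmap (fgen g) \<approx> Tgen g"
proof -
  note psi = psi_gen[of gK] psi_gen[of gKb] psi_gen[of gL] psi_gen[of gLb] psi_gen[of gE] psi_gen[of gF]
  show ?thesis
  proof (cases g)
    case gK
    have "conv psi Tmap XK \<approx> eK * XKb" using eqU_r[OF psi(1)] by (simp add: gen_simps corner_idem_def)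
    then show ?thesis using gK eqU_trans[OF _ eK_Kb] by (simp add: Tgen_def)
  next
    case gKb
    have "conv psi Tmap XKb \<approx> eK * XK" using eqU_r[OF psi(2)] by (simp add: gen_simps corner_idem_def)
    then show ?thesis using gKb eqU_trans[OF _ eK_K] by (simp add: Tgen_def)
  next
    case gL
    have "conv psi Tmap XL = psi XL * XLb + (psi XL * XKb + psi XK * XLb)" by (simp add: gen_simps)
    also have "\<dots> \<approx> eL * XLb + (eL * XKb + eK * XLb)"
      using psi(1,3) by (intro eqU_add eqU_r) (simp_all add: corner_idem_def)
    also have "\<dots> \<approx> XLb + (0 + 0)" by (intro eqU_add eL_Lb mixed_zero)
    finally show ?thesis using gL by (simp add: Tgen_def)
  next
    case gLb
    have "conv psi Tmap XLb = psi XLb * XL + (psi XLb * XK + psi XKb * XL)" by (simp add: gen_simps)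
    also have "\<dots> \<approx> eL * XL + (eL * XK + eK * XL)"
      using psi(2,4) by (intro eqU_add eqU_r) (simp_all add: corner_idem_def)
    also have "\<dots> \<approx> XL + (0 + 0)" by (intro eqU_add eL_L mixed_zero)
    finally show ?thesis using gLb by (simp add: Tgen_def)
  next
    case gE
    have "conv psi Tmap XE = psi 1 * Tgen gE + psi XE * (XKb + XLb)" by (simp add: gen_simps conv_add)
    also have "\<dots> \<approx> 1 * Tgen gE + 0 * (XKb + XLb)"
      using psi(5) by (intro eqU_add eqU_r) (simp_all add: psi_one corner_idem_def)
    finally show ?thesis using gE by simp
  next
    case gF
    have "conv psi Tmap XF = psi XF * 1 + (psi XKb + psi XLb) * Tgen gF" by (simp add: gen_simps conv_add)
    also have "\<dots> \<approx> 0 * 1 + (eK + eL) * Tgen gF"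
      using psi(2,4,6) by (intro eqU_add eqU_r) (simp_all add: corner_idem_def)
    also have "\<dots> \<approx> 0 * 1 + 1 * Tgen gF" by (intro eqU_add eqU_r rel_sum_one eqU_refl)
    finally show ?thesis using gF by simp
  qed
qed

lemma phi_id_word: "conv_word phi id w \<approx> Poly_Mapping.single w 1"
proof (induction w)
  case Nil then show ?case by (simp only: conv_word_Nil phi_one id_apply[of "1::free"]) (simp add: scal_one)
next
  case (Cons g u)
  have "conv_word phi id (g # u) \<approx> conv phi id (fgen g) * conv_word phi id u" by (rule phi_id_word_Cons)
  also have "\<dots> \<approx> fgen g * Poly_Mapping.single u 1" by (rule eqU_mult[OF phi_id_gen Cons])
  finally show ?case by (simp only: single_Cons)
qed

lemma psi_T_word: "conv_word psi Tmap w \<approx> Tword w"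
proof (induction w)
  case Nil then show ?case by (simp only: conv_word_Nil psi_one id_apply[of "1::free"] Tmap_one) (simp add: fone_eq)
next
  case (Cons g u)
  have "conv_word psi Tmap (g # u) \<approx> conv_word psi Tmap u * conv psi Tmap (fgen g)" by (rule psi_T_word_Cons)
  also have "\<dots> \<approx> Tword u * Tgen g" by (rule eqU_mult[OF Cons psi_T_gen])
  finally show ?case by (simp only: Tword.simps fmul_eq)
qed

lemma id_T_id: "conv phi id p \<approx> p"
proof -
  have "conv phi id p \<approx> flin (\<lambda>w. Poly_Mapping.single w 1) p"
    unfolding conv_eq[of phi id] by (rule eqU_flin[OF phi_id_word])
  then show ?thesis by (simp only: flin_words)
qed

lemma T_id_T: "conv psi Tmap p \<approx> Tmap p"
proof -
  have "conv psi Tmap p \<approx> flin Tword p"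
    unfolding conv_eq[of psi Tmap] by (rule eqU_flin[OF psi_T_word])
  then show ?thesis by (simp only: Tmap_def)
qed

end

end

text \<open>The hypotheses q \<noteq> 1, q \<noteq> -1 only make the denominator q - q^-1 in the
  relation for EF - FE nonzero; the argument uses just q \<noteq> 0.\<close>
theorem proposition9:
  fixes q :: complex
  assumes "q \<noteq> 0" and "q \<noteq> 1" and "q \<noteq> -1"
  shows "(\<forall>p. eqU q (conv (conv id Tmap) id p) (id p))
       \<and> (\<forall>p. eqU q (conv (conv Tmap id) Tmap p) (Tmap p))"
  using id_T_id[OF assms(1)] T_id_T[OF assms(1)] by simp

end
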